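(* For $n \geq 3$, the collapsibility number of $\mathcal{VR}(\mathbb{I}_n;2)$ is $4$.
   Context: For $n\ge 1$, $\mathbb{I}_n$ is the $n$-dimensional hypercube graph: vertex set $\{0,1\}^n$, two vertices adjacent iff they differ in exactly one coordinate; it is a metric space with the shortest-path (Hamming) distance $d(v,w)=\#\{i: v(i)\ne w(i)\}$. For a metric space $(X,d)$ and $r\ge0$, $\mathcal{VR}(X;r)$ is the simplicial complex on vertex set $X$ whose simplices are the finite subsets of diameter at most $r$. For a finite simplicial complex $\Delta$: if $\gamma\in\Delta$ with $|\gamma|\le d$ is contained in a unique maximal simplex $\sigma$ of $\Delta$, the elementary $d$-collapse removes all simplices $\tau$ with $\gamma\subseteq\tau\subseteq\sigma$. $\Delta$ is $d$-collapsible if a sequence of elementary $d$-collapses reduces $\Delta$ to the void complex $\emptyset$. The collapsibility number of $\Delta$ is the minimal $d$ such that $\Delta$ is $d$-collapsible. *)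

theory Defs
  imports Complex_Main
begin

text \<open>Hypercube graph I_n: vertex set {0,1}^n, encoded as boolean lists of length n,
  with the Hamming (shortest-path) distance.\<close>

definition cube :: "nat \<Rightarrow> bool list set" where
  "cube n = {v. length v = n}"

definition hamming :: "bool list \<Rightarrow> bool list \<Rightarrow> real" where
  "hamming v w = real (card {i. i < length v \<and> v ! i \<noteq> w ! i})"

text \<open>Simplicial complexes are represented by their set of simplices (finite vertex sets).
  The Vietoris-Rips complex: finite subsets of X of diameter at most r.\<close>

definition VR :: "'a set \<Rightarrow> ('a \<Rightarrow> 'a \<Rightarrow> real) \<Rightarrow> real \<Rightarrow> 'a set set" where
  "VR X d r = {\<sigma>. \<sigma> \<subseteq> X \<and> finite \<sigma> \<and> (\<forall>v\<in>\<sigma>. \<forall>w\<in>\<sigma>. d v w \<le> r)}"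

definition maximal_simplex :: "'a set set \<Rightarrow> 'a set \<Rightarrow> bool" where
  "maximal_simplex K \<sigma> \<longleftrightarrow> \<sigma> \<in> K \<and> \<not> (\<exists>\<tau>\<in>K. \<sigma> \<subset> \<tau>)"

definition elem_collapse :: "nat \<Rightarrow> 'a set set \<Rightarrow> 'a set set \<Rightarrow> bool" where
  "elem_collapse d K K' \<longleftrightarrow>
     (\<exists>\<gamma> \<sigma>. \<gamma> \<in> K \<and> card \<gamma> \<le> d \<and> maximal_simplex K \<sigma> \<and> \<gamma> \<subseteq> \<sigma> \<and>
        (\<forall>\<sigma>'. maximal_simplex K \<sigma>' \<and> \<gamma> \<subseteq> \<sigma>' \<longrightarrow> \<sigma>' = \<sigma>) \<and>
        K' = K - {\<tau>. \<gamma> \<subseteq> \<tau> \<and> \<tau> \<subseteq> \<sigma>})"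

text \<open>d-collapsible: a finite sequence of elementary d-collapses reduces K to the void
  complex (no simplices at all).\<close>

definition d_collapsible :: "nat \<Rightarrow> 'a set set \<Rightarrow> bool" where
  "d_collapsible d K \<longleftrightarrow> (elem_collapse d)\<^sup>*\<^sup>* K {}"

definition collapsibility_number :: "'a set set \<Rightarrow> nat" where
  "collapsibility_number K = (LEAST d. d_collapsible d K)"

end

theory Submission
  imports Defs "HOL-Library.List_Lexorder"
begin

text \<open>
  Upper bound: every face of \<open>VR(I\<^sub>n; 2)\<close> with at least five vertices lies in a closed
  unit ball \<open>B(c, 1)\<close>, and three vertices lie in at most one such ball. Removing by
  elementary 4-collapses the 4-vertex faces contained in no unit ball (they are maximal),
  every 3-vertex face lies in a unique maximal face: a unit ball, or the face itself. A
  complex in which every \<open>k\<close>-vertex face lies in a unique maximal face is \<open>d\<close>-collapsible for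
  \<open>k \<le> d\<close>, by collapsing the \<open>k\<close>-vertex faces in order of decreasing minimal vertex.

  Lower bound: in a copy of \<open>I\<^sub>3\<close>, replacing one vertex of a 4-vertex face of diameter 2
  by its antipode gives another such face, and no face contains a vertex together with its
  antipode. An elementary collapse with free face \<open>\<gamma>\<close>, \<open>|\<gamma>| \<le> 3\<close>, that removed such a face \<open>F\<close>
  would also remove the face obtained by swapping a vertex of \<open>F - \<gamma>\<close>, forcing both into the
  unique maximal face above \<open>\<gamma>\<close>. So these faces survive every sequence of 3-collapses.
\<close>

section \<open>Elementary collapses\<close>

definition downward_closed :: "'a set set \<Rightarrow> bool" where
  "downward_closed K \<longleftrightarrow> (\<forall>\<rho>\<in>K. \<forall>\<tau>. \<tau> \<subseteq> \<rho> \<longrightarrow> \<tau> \<in> K)"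

lemma elem_collapse_subset: "elem_collapse d K K' \<Longrightarrow> K' \<subseteq> K"
  unfolding elem_collapse_def by auto

lemma collapses_subset: "(elem_collapse d)\<^sup>*\<^sup>* K L \<Longrightarrow> L \<subseteq> K"
  by (induction rule: rtranclp_induct) (auto dest: elem_collapse_subset)

lemma maximal_simplex_exists:
  assumes "finite K" "\<rho> \<in> K"
  shows "\<exists>\<sigma>. maximal_simplex K \<sigma> \<and> \<rho> \<subseteq> \<sigma>"
proof -
  obtain \<sigma> where "\<sigma> \<in> {\<tau>\<in>K. \<rho> \<subseteq> \<tau>}" "\<forall>\<tau>\<in>{\<tau>\<in>K. \<rho> \<subseteq> \<tau>}. \<sigma> \<le> \<tau> \<longrightarrow> \<sigma> = \<tau>"
    using finite_has_maximal[of "{\<tau>\<in>K. \<rho> \<subseteq> \<tau>}"] assms by auto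
  then show ?thesis
    unfolding maximal_simplex_def by (metis (no_types, lifting) mem_Collect_eq order.trans psubset_eq)
qed

lemma elem_collapse_star:
  assumes "\<gamma> \<in> K" "card \<gamma> \<le> d" "\<sigma> \<in> K" "\<forall>\<rho>\<in>K. \<gamma> \<subseteq> \<rho> \<longrightarrow> \<rho> \<subseteq> \<sigma>"
  shows "elem_collapse d K {\<rho>\<in>K. \<not> \<gamma> \<subseteq> \<rho>}"
proof -
  have "maximal_simplex K \<sigma>" and "\<gamma> \<subseteq> \<sigma>"
    using assms unfolding maximal_simplex_def by blast+
  moreover have "\<forall>\<sigma>'. maximal_simplex K \<sigma>' \<and> \<gamma> \<subseteq> \<sigma>' \<longrightarrow> \<sigma>' = \<sigma>"
    using assms unfolding maximal_simplex_def by blast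
  moreover have "{\<rho>\<in>K. \<not> \<gamma> \<subseteq> \<rho>} = K - {\<tau>. \<gamma> \<subseteq> \<tau> \<and> \<tau> \<subseteq> \<sigma>}"
    using assms(4) by auto
  ultimately show ?thesis
    using assms(1,2) unfolding elem_collapse_def by blast
qed

lemma elem_collapse_maximal:
  assumes "\<sigma> \<in> K" "card \<sigma> \<le> d" "\<not> (\<exists>\<tau>\<in>K. \<sigma> \<subset> \<tau>)"
  shows "elem_collapse d K (K - {\<sigma>})"
proof -
  have "{\<rho>\<in>K. \<not> \<sigma> \<subseteq> \<rho>} = K - {\<sigma>}"
    using assms(3) by auto
  then show ?thesis
    using elem_collapse_star[OF assms(1,2,1)] assms(3) by auto
qed

lemma collapses_remove_maximal:
  assumes "finite M" "\<forall>\<sigma>\<in>M. \<sigma> \<in> K \<and> card \<sigma> \<le> d \<and> \<not> (\<exists>\<tau>\<in>K. \<sigma> \<subset> \<tau>)"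
  shows "(elem_collapse d)\<^sup>*\<^sup>* K (K - M)"
  using assms
proof (induction M rule: finite_induct)
  case empty
  then show ?case by simp
next
  case (insert \<sigma> M)
  then have "elem_collapse d (K - M) (K - M - {\<sigma>})"
    by (intro elem_collapse_maximal) auto
  moreover have "K - M - {\<sigma>} = K - insert \<sigma> M" by auto
  ultimately show ?case
    using insert by (metis insert_iff rtranclp.rtrancl_into_rtrancl)
qed

lemma downward_closed_Diff_maximal:
  assumes "downward_closed K" "\<forall>\<sigma>\<in>M. \<not> (\<exists>\<tau>\<in>K. \<sigma> \<subset> \<tau>)"
  shows "downward_closed (K - M)"
  unfolding downward_closed_def
proof (intro ballI allI impI)
  fix \<rho> \<tau> assume "\<rho> \<in> K - M" "\<tau> \<subseteq> \<rho>"
  moreover from this have "\<tau> \<in> K"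
    using assms(1) unfolding downward_closed_def by blast
  ultimately show "\<tau> \<in> K - M"
    using assms(2) by blast
qed

lemma collapsible_small_faces:
  assumes "finite K" "\<forall>\<rho>\<in>K. card \<rho> \<le> d"
  shows "(elem_collapse d)\<^sup>*\<^sup>* K {}"
  using assms
proof (induction "card K" arbitrary: K rule: less_induct)
  case less
  show ?case
  proof (cases "K = {}")
    case False
    then obtain \<sigma> where \<sigma>: "\<sigma> \<in> K" "\<forall>\<tau>\<in>K. \<sigma> \<le> \<tau> \<longrightarrow> \<sigma> = \<tau>"
      using finite_has_maximal[OF less.prems(1)] by blast
    then have "elem_collapse d K (K - {\<sigma>})"
      using less.prems by (intro elem_collapse_maximal) auto
    moreover have "card (K - {\<sigma>}) < card K"
      using less.prems(1) \<sigma>(1) by (meson card_Diff1_less)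
    then have "(elem_collapse d)\<^sup>*\<^sup>* (K - {\<sigma>}) {}"
      using less.prems by (intro less.hyps) auto
    ultimately show ?thesis
      by (meson converse_rtranclp_into_rtranclp)
  qed simp
qed

section \<open>Collapsing along an order\<close>

definition final_segment :: "'a::linorder set \<Rightarrow> 'a set \<Rightarrow> bool" where
  "final_segment T \<rho> \<longleftrightarrow> T \<subseteq> \<rho> \<and> (\<forall>x\<in>\<rho> - T. x < Min T)"

definition segment_hull :: "'a::linorder set set \<Rightarrow> 'a set \<Rightarrow> 'a set" where
  "segment_hull K T = \<Union>{\<rho>\<in>K. final_segment T \<rho>}"

text \<open>
  A collapse may destroy the property that each \<open>k\<close>-vertex face lies in a unique maximal
  face. What survives collapsing the \<open>k\<close>-vertex face with the largest minimum is the weaker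
  invariant that every \<open>segment_hull K T\<close> is a face.
\<close>

lemma final_segment_unique:
  assumes "finite T" "finite T'" "card T = card T'" "final_segment T \<rho>" "final_segment T' \<rho>"
  shows "T = T'"
proof (rule ccontr)
  assume "T \<noteq> T'"
  moreover have "T \<subseteq> T' \<Longrightarrow> T = T'" "T' \<subseteq> T \<Longrightarrow> T' = T"
    using assms(1-3) by (simp_all add: card_subset_eq)
  ultimately obtain y z where yz: "y \<in> T - T'" "z \<in> T' - T"
    by blast
  then have "z < Min T" "y < Min T'"
    using assms(4,5) unfolding final_segment_def by auto
  moreover have "Min T \<le> y" "Min T' \<le> z"
    using yz assms(1,2) by auto
  ultimately show False by simp
qed

lemma final_segment_segment_hull:
  assumes "T \<in> K"
  shows "final_segment T (segment_hull K T)"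
proof -
  have "final_segment T T" unfolding final_segment_def by simp
  then show ?thesis
    using assms unfolding segment_hull_def final_segment_def by blast
qed

lemma final_segment_if_Min_maximal:
  assumes "downward_closed K" "T \<in> K" "finite T" "T \<noteq> {}"
    and Min_max: "\<forall>T'\<in>K. card T' = card T \<longrightarrow> Min T' \<le> Min T"
    and "\<rho> \<in> K" "T \<subseteq> \<rho>"
  shows "final_segment T \<rho>"
  unfolding final_segment_def
proof (intro conjI ballI assms(7), rule ccontr)
  fix x assume x: "x \<in> \<rho> - T" "\<not> x < Min T"
  define T' where "T' = insert x (T - {Min T})"
  have "Min T \<in> T" using assms(3,4) by simp
  then have "Min T < x" using x by (metis DiffD2 antisym_conv3)
  have "T' \<subseteq> \<rho>"
    using assms(7) x(1) unfolding T'_def by blast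
  then have "T' \<in> K"
    using assms(1,6) unfolding downward_closed_def by blast
  moreover have "card T' = Suc (card (T - {Min T}))"
    using x(1) assms(3) unfolding T'_def by simp
  then have "card T' = card T"
    using card_Suc_Diff1[OF assms(3) \<open>Min T \<in> T\<close>] by simp
  ultimately have "Min T' \<le> Min T"
    using Min_max by blast
  moreover have "Min T < Min T'"
  proof -
    have "\<forall>a\<in>T'. Min T < a"
      using \<open>Min T < x\<close> assms(3) unfolding T'_def by (auto simp: order_less_le)
    then show ?thesis
      using assms(3) unfolding T'_def by (simp add: Min_gr_iff)
  qed
  ultimately show False by simp
qed

lemma segment_hull_delete_star:
  assumes T0: "finite T0" "\<forall>\<rho>\<in>K. T0 \<subseteq> \<rho> \<longrightarrow> final_segment T0 \<rho>"
    and T: "T \<in> K" "finite T" "card T = card T0" "\<not> T0 \<subseteq> T" "segment_hull K T \<in> K"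
  shows "segment_hull {\<rho>\<in>K. \<not> T0 \<subseteq> \<rho>} T \<in> {\<rho>\<in>K. \<not> T0 \<subseteq> \<rho>}"
proof -
  have avoids: "\<not> T0 \<subseteq> \<rho>" if "\<rho> \<in> K" "final_segment T \<rho>" for \<rho>
    using final_segment_unique[OF T(2) T0(1) T(3)] T0(2) T(4) that by blast
  then have "segment_hull {\<rho>\<in>K. \<not> T0 \<subseteq> \<rho>} T = segment_hull K T"
    unfolding segment_hull_def by blast
  then show ?thesis
    using avoids[OF T(5) final_segment_segment_hull[OF T(1)]] T(5) by simp
qed

lemma collapse_face_of_maximal_Min:
  fixes K :: "'a::linorder set set"
  assumes K: "finite K" "\<forall>\<rho>\<in>K. finite \<rho>" "downward_closed K"
    and k: "1 \<le> k" "k \<le> d"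
    and hull: "\<forall>T\<in>K. card T = k \<longrightarrow> segment_hull K T \<in> K"
    and "\<exists>T\<in>K. card T = k"
  obtains T0 where "T0 \<in> K" "card T0 = k" "elem_collapse d K {\<rho>\<in>K. \<not> T0 \<subseteq> \<rho>}"
    "\<forall>T\<in>{\<rho>\<in>K. \<not> T0 \<subseteq> \<rho>}. card T = k \<longrightarrow>
       segment_hull {\<rho>\<in>K. \<not> T0 \<subseteq> \<rho>} T \<in> {\<rho>\<in>K. \<not> T0 \<subseteq> \<rho>}"
proof -
  let ?A = "{T\<in>K. card T = k}"
  have "finite ?A" "?A \<noteq> {}"
    using K(1) \<open>\<exists>T\<in>K. card T = k\<close> by auto
  then obtain T0 where T0: "T0 \<in> ?A" "\<forall>T\<in>?A. Min T \<le> Min T0"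
    by (metis (no_types, lifting) obtains_MAX Max_ge finite_imageI image_eqI)
  have "finite T0" "T0 \<noteq> {}"
    using T0(1) K(2) k(1) by auto
  then have segment: "\<forall>\<rho>\<in>K. T0 \<subseteq> \<rho> \<longrightarrow> final_segment T0 \<rho>"
    using final_segment_if_Min_maximal[OF K(3)] T0 by auto
  have "segment_hull K T0 \<in> K"
    using hull T0(1) by blast
  moreover have "\<forall>\<rho>\<in>K. T0 \<subseteq> \<rho> \<longrightarrow> \<rho> \<subseteq> segment_hull K T0"
    using segment unfolding segment_hull_def by blast
  ultimately have "elem_collapse d K {\<rho>\<in>K. \<not> T0 \<subseteq> \<rho>}"
    using T0(1) k(2) by (intro elem_collapse_star) auto
  moreover have "\<forall>T\<in>{\<rho>\<in>K. \<not> T0 \<subseteq> \<rho>}. card T = k \<longrightarrow>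
       segment_hull {\<rho>\<in>K. \<not> T0 \<subseteq> \<rho>} T \<in> {\<rho>\<in>K. \<not> T0 \<subseteq> \<rho>}"
    using segment_hull_delete_star[OF \<open>finite T0\<close> segment] hull K(2) T0(1) by auto
  ultimately show ?thesis
    using that T0(1) by blast
qed

lemma collapsible_if_segment_hulls:
  fixes K :: "'a::linorder set set"
  assumes "finite K" "\<forall>\<rho>\<in>K. finite \<rho>" "downward_closed K" "1 \<le> k" "k \<le> d"
    and "\<forall>T\<in>K. card T = k \<longrightarrow> segment_hull K T \<in> K"
  shows "(elem_collapse d)\<^sup>*\<^sup>* K {}"
  using assms
proof (induction "card {T\<in>K. card T = k}" arbitrary: K rule: less_induct)
  case less
  show ?case
  proof (cases "\<exists>T\<in>K. card T = k")
    case True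
    then obtain T0 where T0: "T0 \<in> K" "card T0 = k"
      and collapse: "elem_collapse d K {\<rho>\<in>K. \<not> T0 \<subseteq> \<rho>}"
      and hull': "\<forall>T\<in>{\<rho>\<in>K. \<not> T0 \<subseteq> \<rho>}. card T = k \<longrightarrow>
         segment_hull {\<rho>\<in>K. \<not> T0 \<subseteq> \<rho>} T \<in> {\<rho>\<in>K. \<not> T0 \<subseteq> \<rho>}"
      using collapse_face_of_maximal_Min less.prems by blast
    have "{T\<in>{\<rho>\<in>K. \<not> T0 \<subseteq> \<rho>}. card T = k} \<subset> {T\<in>K. card T = k}"
      using T0 by blast
    then have "card {T\<in>{\<rho>\<in>K. \<not> T0 \<subseteq> \<rho>}. card T = k} < card {T\<in>K. card T = k}"
      using less.prems(1) by (simp add: psubset_card_mono)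
    moreover have "downward_closed {\<rho>\<in>K. \<not> T0 \<subseteq> \<rho>}"
      using less.prems(3) unfolding downward_closed_def by blast
    ultimately have "(elem_collapse d)\<^sup>*\<^sup>* {\<rho>\<in>K. \<not> T0 \<subseteq> \<rho>} {}"
      using less.prems hull' by (intro less.hyps) auto
    then show ?thesis
      using collapse by (meson converse_rtranclp_into_rtranclp)
  next
    case False
    have "card \<rho> \<le> d" if "\<rho> \<in> K" for \<rho>
    proof (rule ccontr)
      assume "\<not> card \<rho> \<le> d"
      then obtain T where "T \<subseteq> \<rho>" "card T = k"
        using less.prems(5) by (metis le_trans nat_le_linear obtain_subset_with_card_n)
      then show False
        using False less.prems(3) that unfolding downward_closed_def by blast
    qed
    then show ?thesis
      using collapsible_small_faces less.prems(1) by blast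
  qed
qed

lemma collapsible_if_faces_in_unique_maximal:
  fixes K :: "'a::linorder set set"
  assumes "finite K" "\<forall>\<rho>\<in>K. finite \<rho>" "downward_closed K" "1 \<le> k" "k \<le> d"
    and unique: "\<forall>T\<in>K. card T = k \<longrightarrow> (\<exists>\<sigma>\<in>K. \<forall>\<rho>\<in>K. T \<subseteq> \<rho> \<longrightarrow> \<rho> \<subseteq> \<sigma>)"
  shows "d_collapsible d K"
  unfolding d_collapsible_def
proof (rule collapsible_if_segment_hulls[OF assms(1-5)], intro ballI impI)
  fix T assume "T \<in> K" "card T = k"
  then obtain \<sigma> where "\<sigma> \<in> K" "\<forall>\<rho>\<in>K. T \<subseteq> \<rho> \<longrightarrow> \<rho> \<subseteq> \<sigma>"
    using unique by blast
  moreover from this(2) have "segment_hull K T \<subseteq> \<sigma>"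
    unfolding segment_hull_def final_segment_def by blast
  ultimately show "segment_hull K T \<in> K"
    using assms(3) unfolding downward_closed_def by blast
qed

section \<open>Families of sets of size at most two\<close>

lemma sym_diff_card_le_2_cases:
  assumes "finite A" "finite B" "card (sym_diff A B) \<le> 2"
  shows "A = {} \<or> B = {} \<or> A \<inter> B \<noteq> {} \<or> (card A \<le> 1 \<and> card B \<le> 1)"
proof (rule ccontr)
  assume "\<not> ?thesis"
  then have "sym_diff A B = A \<union> B" "A \<inter> B = {}" "1 \<le> card A" "1 \<le> card B" "2 \<le> card A \<or> 2 \<le> card B"
    using assms(1,2) by (auto simp: Suc_le_eq card_gt_0_iff)
  then show False
    using assms card_Un_disjoint[OF assms(1,2)] by simp
qed

lemma card_le_2_doubleton:
  assumes "finite A" "card A \<le> 2" "A \<noteq> {}"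
  obtains x y where "A = {x, y}"
proof -
  have "card A \<noteq> 0"
    using assms(1,3) by simp
  then have "card A = 1 \<or> card A = 2"
    using assms(2) by linarith
  then show ?thesis
  proof
    assume "card A = 1"
    then obtain x where "A = {x, x}"
      by (auto simp: card_1_singleton_iff)
    then show ?thesis by (rule that)
  next
    assume "card A = 2"
    then show ?thesis
      using that unfolding card_2_iff by blast
  qed
qed

lemma card_doubleton_le_1_iff: "card {x, y} \<le> 1 \<longleftrightarrow> x = y"
  by (cases "x = y") auto

text \<open>
  Without a common point, the nonempty members lie either in \<open>{{i}, {j}, {i, j}}\<close> or in a
  triangle \<open>{{i, j}, {j, k}, {i, k}}\<close>.
\<close>

lemma card_le_4_if_no_common_point:
  assumes F: "\<forall>A\<in>F. finite A \<and> card A \<le> 2"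
    and meet: "\<forall>A\<in>F. \<forall>B\<in>F. A = {} \<or> B = {} \<or> A \<inter> B \<noteq> {} \<or> (card A \<le> 1 \<and> card B \<le> 1)"
    and A0: "A0 \<in> F" "card A0 = 2"
    and no_center: "\<forall>i. \<exists>B\<in>F. B \<noteq> {} \<and> i \<notin> B"
  shows "card F \<le> 4"
proof -
  obtain i j where ij: "A0 = {i, j}" "i \<noteq> j"
    using A0(2) unfolding card_2_iff by blast
  obtain Bi where Bi: "Bi \<in> F" "Bi \<noteq> {}" "i \<notin> Bi"
    using no_center by blast
  moreover have "finite Bi" "card Bi \<le> 2"
    using F Bi(1) by auto
  ultimately obtain p p' where p: "Bi = {p, p'}"
    using card_le_2_doubleton by blast
  obtain Bj where Bj: "Bj \<in> F" "Bj \<noteq> {}" "j \<notin> Bj"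
    using no_center by blast
  moreover have "finite Bj" "card Bj \<le> 2"
    using F Bj(1) by auto
  ultimately obtain q q' where q: "Bj = {q, q'}"
    using card_le_2_doubleton by blast
  have "B \<in> {{}, A0, Bi, Bj}" if "B \<in> F" for B
  proof (cases "B = {}")
    case False
    moreover have "finite B" "card B \<le> 2"
      using F that by auto
    ultimately obtain x y where xy: "B = {x, y}"
      using card_le_2_doubleton by blast
    have "x = i \<or> x = j \<or> y = i \<or> y = j" "p = i \<or> p = j \<or> p' = i \<or> p' = j"
      "q = i \<or> q = j \<or> q' = i \<or> q' = j"
      using meet A0(1) Bi(1) Bj(1) that ij by (force simp: xy p q)+
    moreover have "p = q \<or> p = q' \<or> p' = q \<or> p' = q' \<or> (p = p' \<and> q = q')"
      "x = p \<or> x = p' \<or> y = p \<or> y = p' \<or> (x = y \<and> p = p')"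
      "x = q \<or> x = q' \<or> y = q \<or> y = q' \<or> (x = y \<and> q = q')"
      using meet Bi(1) Bj(1) that by (force simp: xy p q card_doubleton_le_1_iff)+
    moreover have "i \<noteq> p" "i \<noteq> p'" "j \<noteq> q" "j \<noteq> q'"
      using Bi(3) Bj(3) unfolding p q by auto
    ultimately have "(x = i \<and> y = j \<or> x = j \<and> y = i) \<or> (x = p \<and> y = p' \<or> x = p' \<and> y = p) \<or>
        (x = q \<and> y = q' \<or> x = q' \<and> y = q)"
      using ij(2) by smt
    then show ?thesis
      unfolding xy ij(1) p q by auto
  qed simp
  then have "card F \<le> card {{}, A0, Bi, Bj}"
    by (intro card_mono) auto
  also have "\<dots> \<le> 4"
    by (simp add: card_insert_if)
  finally show ?thesis .
qed

lemma large_sym_diff_family_has_center: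
  assumes F: "\<forall>A\<in>F. finite A \<and> card A \<le> 2"
    and close: "\<forall>A\<in>F. \<forall>B\<in>F. card (sym_diff A B) \<le> 2"
    and "5 \<le> card F"
  obtains C where "C \<subseteq> \<Union>F" "card C \<le> 1" "\<forall>A\<in>F. card (sym_diff A C) \<le> 1"
proof (cases "\<forall>A\<in>F. card A \<le> 1")
  case True
  then show ?thesis
    using that[of "{}"] by simp
next
  case False
  then obtain A0 where "A0 \<in> F" "\<not> card A0 \<le> 1"
    by blast
  moreover have "card A0 \<le> 2"
    using F \<open>A0 \<in> F\<close> by blast
  ultimately have A0: "A0 \<in> F" "card A0 = 2"
    by auto
  have meet: "\<forall>A\<in>F. \<forall>B\<in>F. A = {} \<or> B = {} \<or> A \<inter> B \<noteq> {} \<or> (card A \<le> 1 \<and> card B \<le> 1)"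
  proof (intro ballI)
    fix A B assume "A \<in> F" "B \<in> F"
    then show "A = {} \<or> B = {} \<or> A \<inter> B \<noteq> {} \<or> (card A \<le> 1 \<and> card B \<le> 1)"
      using F close by (intro sym_diff_card_le_2_cases) auto
  qed
  have "\<not> (\<forall>i. \<exists>B\<in>F. B \<noteq> {} \<and> i \<notin> B)"
  proof
    assume "\<forall>i. \<exists>B\<in>F. B \<noteq> {} \<and> i \<notin> B"
    then have "card F \<le> 4"
      by (rule card_le_4_if_no_common_point[OF F meet A0])
    then show False
      using \<open>5 \<le> card F\<close> by simp
  qed
  then obtain i where i: "\<forall>B\<in>F. B \<noteq> {} \<longrightarrow> i \<in> B"
    by blast
  have "card (sym_diff A {i}) \<le> 1" if "A \<in> F" for A
  proof (cases "A = {}")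
    case False
    then have "i \<in> A"
      using i that by blast
    moreover have "finite A" "card A \<le> 2"
      using F that by auto
    ultimately show ?thesis
      by (simp add: insert_absorb)
  qed simp
  moreover have "A0 \<noteq> {}"
    using A0(2) by auto
  then have "i \<in> \<Union>F"
    using i A0(1) by blast
  ultimately show ?thesis
    using that[of "{i}"] by simp
qed

lemma card_common_unit_neighbours_le_2:
  assumes "finite E" "E \<noteq> {}"
    and G: "\<forall>S\<in>G. finite S \<and> card S \<le> 1 \<and> card (sym_diff S E) \<le> 1"
  shows "card G \<le> 2"
proof (cases "G = {}")
  case False
  have "card E \<noteq> 0"
    using assms(1,2) by simp
  have sub: "S \<subseteq> E" if "S \<in> G" for S
  proof
    fix x assume "x \<in> S"
    then have "S = {x}"
      using G that card_le_Suc0_iff_eq by fastforce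
    then show "x \<in> E"
      using G that assms(1) \<open>card E \<noteq> 0\<close> by (cases "x \<in> E") (auto simp: insert_Diff_if)
  qed
  have card_E: "card E \<le> card S + 1" if "S \<in> G" for S
  proof -
    have "card E = card S + card (E - S)"
      using sub[OF that] assms(1) by (metis card_Diff_subset card_mono le_add_diff_inverse finite_subset)
    also have "E - S = sym_diff S E"
      using sub[OF that] by blast
    finally show ?thesis
      using G that by fastforce
  qed
  obtain S0 where "S0 \<in> G"
    using False by blast
  then have "card E \<le> 2"
    using card_E G by fastforce
  show ?thesis
  proof (cases "card E = 1")
    case True
    have "card G \<le> card (Pow E)"
      using sub assms(1) by (intro card_mono) auto
    then show ?thesis
      using True assms(1) by (simp add: card_Pow)
  next
    case False
    have "S \<in> (\<lambda>x. {x}) ` E" if "S \<in> G" for S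
    proof -
      have "card S \<le> 1"
        using G that by blast
      then have "card S = 1"
        using card_E[OF that] False \<open>card E \<noteq> 0\<close> by linarith
      then show ?thesis
        using sub[OF that] by (auto simp: card_1_singleton_iff)
    qed
    then have "card G \<le> card ((\<lambda>x. {x}) ` E)"
      using assms(1) by (intro card_mono) auto
    also have "\<dots> \<le> card E"
      using card_image_le[OF assms(1)] .
    finally show ?thesis
      using \<open>card E \<le> 2\<close> by simp
  qed
qed simp

section \<open>Hamming geometry of the cube\<close>

definition diff_coords :: "bool list \<Rightarrow> bool list \<Rightarrow> nat set" where
  "diff_coords v w = {i. i < length v \<and> v ! i \<noteq> w ! i}"

definition flip_coords :: "bool list \<Rightarrow> nat set \<Rightarrow> bool list" where
  "flip_coords v C = map (\<lambda>i. if i \<in> C then \<not> v ! i else v ! i) [0..<length v]"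

definition unit_ball :: "nat \<Rightarrow> bool list \<Rightarrow> bool list set" where
  "unit_ball n c = {w \<in> cube n. hamming c w \<le> 1}"

lemma hamming_eq_card_diff_coords: "hamming v w = real (card (diff_coords v w))"
  unfolding hamming_def diff_coords_def by simp

lemma finite_diff_coords [simp]: "finite (diff_coords v w)"
  unfolding diff_coords_def by simp

lemma diff_coords_subset: "diff_coords v w \<subseteq> {..<length v}"
  unfolding diff_coords_def by auto

lemma diff_coords_commute: "length v = length w \<Longrightarrow> diff_coords v w = diff_coords w v"
  unfolding diff_coords_def by auto

lemma diff_coords_eq_empty_iff:
  assumes "length v = length w"
  shows "diff_coords v w = {} \<longleftrightarrow> v = w"
proof
  assume "diff_coords v w = {}"
  then show "v = w"
    using assms unfolding diff_coords_def by (auto intro: nth_equalityI)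
qed (simp add: diff_coords_def)

lemma diff_coords_eq_sym_diff:
  assumes "length a = length v" "length a = length w"
  shows "diff_coords v w = sym_diff (diff_coords a v) (diff_coords a w)"
  using assms unfolding diff_coords_def by auto

lemma diff_coords_inj_on:
  assumes "\<forall>v\<in>X. length v = length a"
  shows "inj_on (diff_coords a) X"
proof (rule inj_onI)
  fix v w assume vw: "v \<in> X" "w \<in> X" "diff_coords a v = diff_coords a w"
  then have length: "length a = length v" "length a = length w"
    using assms by auto
  then have "diff_coords v w = sym_diff (diff_coords a v) (diff_coords a w)"
    by (rule diff_coords_eq_sym_diff)
  also have "\<dots> = {}"
    using vw(3) by simp
  finally show "v = w"
    using length diff_coords_eq_empty_iff by simp
qed

lemma card_diff_coords_triangle:
  assumes "length u = length v" "length v = length w"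
  shows "card (diff_coords u w) \<le> card (diff_coords u v) + card (diff_coords v w)"
proof -
  have "diff_coords u w \<subseteq> diff_coords u v \<union> diff_coords v w"
    using assms unfolding diff_coords_def by auto
  then show ?thesis
    by (meson card_Un_le card_mono finite_UnI finite_diff_coords order_trans)
qed

lemma diff_coords_flip_coords: "C \<subseteq> {..<length v} \<Longrightarrow> diff_coords v (flip_coords v C) = C"
  unfolding diff_coords_def flip_coords_def by auto

lemma length_flip_coords [simp]: "length (flip_coords v C) = length v"
  unfolding flip_coords_def by simp

lemma finite_cube: "finite (cube n)"
  unfolding cube_def using finite_lists_length_eq[of "UNIV :: bool set" n] by simp

lemma VR_cube_iff:
  "X \<in> VR (cube n) hamming 2 \<longleftrightarrow>
     X \<subseteq> cube n \<and> finite X \<and> (\<forall>v\<in>X. \<forall>w\<in>X. card (diff_coords v w) \<le> 2)"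
  unfolding VR_def hamming_eq_card_diff_coords by auto

lemma unit_ball_in_VR:
  assumes "c \<in> cube n"
  shows "unit_ball n c \<in> VR (cube n) hamming 2"
  unfolding VR_cube_iff
proof (intro conjI ballI)
  fix v w assume "v \<in> unit_ball n c" "w \<in> unit_ball n c"
  moreover have "length c = n" using assms unfolding cube_def by simp
  ultimately show "card (diff_coords v w) \<le> 2"
    using card_diff_coords_triangle[of v c w] diff_coords_commute[of v c]
    unfolding unit_ball_def cube_def hamming_eq_card_diff_coords by simp
qed (use finite_cube in \<open>auto simp: unit_ball_def\<close>)

lemma large_simplex_in_unit_ball:
  assumes X: "X \<in> VR (cube n) hamming 2" and "5 \<le> card X"
  obtains c where "c \<in> cube n" "X \<subseteq> unit_ball n c"
proof -
  have "X \<noteq> {}" using \<open>5 \<le> card X\<close> by auto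
  then obtain a where a: "a \<in> X" by blast
  have "X \<subseteq> cube n"
    using X unfolding VR_cube_iff by blast
  then have length: "\<forall>v\<in>X. length v = n" "length a = n"
    using a unfolding cube_def by auto
  define F where "F = diff_coords a ` X"
  have "card F = card X"
    unfolding F_def using length by (intro card_image diff_coords_inj_on) simp
  then have "5 \<le> card F"
    using \<open>5 \<le> card X\<close> by simp
  have diam: "card (diff_coords v w) \<le> 2" if "v \<in> X" "w \<in> X" for v w
    using X that unfolding VR_cube_iff by blast
  have "\<forall>A\<in>F. finite A \<and> card A \<le> 2"
    using diam a unfolding F_def by auto
  moreover have "\<forall>A\<in>F. \<forall>B\<in>F. card (sym_diff A B) \<le> 2"
  proof (intro ballI)
    fix A B assume "A \<in> F" "B \<in> F"
    then obtain v w where "v \<in> X" "w \<in> X" "A = diff_coords a v" "B = diff_coords a w"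
      unfolding F_def by blast
    then show "card (sym_diff A B) \<le> 2"
      using diam[of v w] diff_coords_eq_sym_diff[of a v w] length by simp
  qed
  ultimately obtain C where C: "C \<subseteq> \<Union>F" "card C \<le> 1" "\<forall>A\<in>F. card (sym_diff A C) \<le> 1"
    using large_sym_diff_family_has_center \<open>5 \<le> card F\<close> by blast
  define c where "c = flip_coords a C"
  have "C \<subseteq> {..<length a}"
    using C(1) diff_coords_subset unfolding F_def by blast
  then have "diff_coords a c = C"
    unfolding c_def by (rule diff_coords_flip_coords)
  have "c \<in> cube n"
    using length unfolding c_def cube_def by simp
  have "w \<in> unit_ball n c" if "w \<in> X" for w
  proof -
    have "diff_coords c w = sym_diff C (diff_coords a w)"
      using diff_coords_eq_sym_diff[of a c w] length that \<open>diff_coords a c = C\<close> unfolding c_def by simp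
    also have "\<dots> = sym_diff (diff_coords a w) C"
      by blast
    finally have "card (diff_coords c w) \<le> 1"
      using C(3) that unfolding F_def by simp
    then show ?thesis
      using that \<open>X \<subseteq> cube n\<close> unfolding unit_ball_def hamming_eq_card_diff_coords by auto
  qed
  then show ?thesis
    using that \<open>c \<in> cube n\<close> by blast
qed

lemma unit_ball_center_unique:
  assumes c: "c \<in> cube n" "c' \<in> cube n"
    and \<tau>: "\<tau> \<subseteq> unit_ball n c" "\<tau> \<subseteq> unit_ball n c'" "3 \<le> card \<tau>"
  shows "c = c'"
proof (rule ccontr)
  assume "c \<noteq> c'"
  have "\<tau> \<subseteq> cube n"
    using \<tau>(1) unfolding unit_ball_def by blast
  then have length: "length c = n" "length c' = n" "\<forall>w\<in>\<tau>. length w = n"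
    using c unfolding cube_def by auto
  let ?E = "diff_coords c c'"
  have "?E \<noteq> {}"
    using length(1,2) \<open>c \<noteq> c'\<close> by (simp add: diff_coords_eq_empty_iff)
  moreover have "\<forall>S\<in>diff_coords c ` \<tau>. finite S \<and> card S \<le> 1 \<and> card (sym_diff S ?E) \<le> 1"
  proof
    fix S assume "S \<in> diff_coords c ` \<tau>"
    then obtain w where w: "w \<in> \<tau>" "S = diff_coords c w" by blast
    have "card S \<le> 1" "card (diff_coords c' w) \<le> 1"
      using \<tau>(1,2) w unfolding unit_ball_def hamming_eq_card_diff_coords by auto
    moreover have "diff_coords c' w = sym_diff ?E S"
      using diff_coords_eq_sym_diff[of c c' w] length w by simp
    moreover have "sym_diff ?E S = sym_diff S ?E"
      by blast
    ultimately show "finite S \<and> card S \<le> 1 \<and> card (sym_diff S ?E) \<le> 1"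
      using w(2) by simp
  qed
  ultimately have "card (diff_coords c ` \<tau>) \<le> 2"
    by (rule card_common_unit_neighbours_le_2[OF finite_diff_coords])
  moreover have "card (diff_coords c ` \<tau>) = card \<tau>"
    using length by (intro card_image diff_coords_inj_on) simp
  ultimately show False
    using \<tau>(3) by simp
qed

section \<open>Upper bound\<close>

lemma finite_VR_cube: "finite (VR (cube n) hamming 2)"
  by (rule finite_subset[of _ "Pow (cube n)"]) (auto simp: VR_def finite_cube)

lemma downward_closed_VR: "downward_closed (VR X d r)"
  unfolding downward_closed_def VR_def by (auto intro: finite_subset)

lemma triangle_in_unique_maximal_face:
  assumes L: "L \<subseteq> VR (cube n) hamming 2" "\<forall>c\<in>cube n. unit_ball n c \<in> L"
    and large: "\<forall>\<rho>\<in>L. 4 \<le> card \<rho> \<longrightarrow> (\<exists>c\<in>cube n. \<rho> \<subseteq> unit_ball n c)"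
    and T: "T \<in> L" "card T = 3"
  shows "\<exists>\<sigma>\<in>L. \<forall>\<rho>\<in>L. T \<subseteq> \<rho> \<longrightarrow> \<rho> \<subseteq> \<sigma>"
proof -
  have small_eq: "\<rho> = T" if "\<rho> \<in> L" "T \<subseteq> \<rho>" "\<not> 4 \<le> card \<rho>" for \<rho>
  proof -
    have "finite \<rho>"
      using L(1) that(1) unfolding VR_def by blast
    moreover from this have "card T \<le> card \<rho>"
      using that(2) by (rule card_mono)
    then have "card T = card \<rho>"
      using that(3) T(2) by simp
    ultimately show ?thesis
      using that(2) card_subset_eq by metis
  qed
  show ?thesis
  proof (cases "\<exists>\<rho>\<in>L. T \<subseteq> \<rho> \<and> 4 \<le> card \<rho>")
    case True
    then obtain c where c: "c \<in> cube n" "T \<subseteq> unit_ball n c"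
      using large by blast
    have "\<rho> \<subseteq> unit_ball n c" if \<rho>: "\<rho> \<in> L" "T \<subseteq> \<rho>" for \<rho>
    proof (cases "4 \<le> card \<rho>")
      case True
      then obtain c' where "c' \<in> cube n" "\<rho> \<subseteq> unit_ball n c'"
        using large \<rho>(1) by blast
      moreover from this have "c' = c"
        using unit_ball_center_unique[of c' n c T] c \<rho>(2) T(2) by (simp add: subset_trans)
      ultimately show ?thesis by simp
    qed (use small_eq c \<rho> in blast)
    then show ?thesis
      using L(2) c(1) by blast
  next
    case False
    then show ?thesis
      using T(1) small_eq by blast
  qed
qed

lemma tetrahedron_outside_unit_balls_maximal:
  assumes "\<sigma> \<in> VR (cube n) hamming 2" "card \<sigma> = 4" "\<forall>c\<in>cube n. \<not> \<sigma> \<subseteq> unit_ball n c"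
  shows "\<not> (\<exists>\<tau>\<in>VR (cube n) hamming 2. \<sigma> \<subset> \<tau>)"
proof
  assume "\<exists>\<tau>\<in>VR (cube n) hamming 2. \<sigma> \<subset> \<tau>"
  then obtain \<tau> where \<tau>: "\<tau> \<in> VR (cube n) hamming 2" "\<sigma> \<subset> \<tau>" by blast
  have "finite \<tau>"
    using \<tau>(1) unfolding VR_def by blast
  then have "card \<sigma> < card \<tau>"
    using \<tau>(2) by (rule psubset_card_mono)
  then have "5 \<le> card \<tau>"
    using assms(2) by simp
  then obtain c where "c \<in> cube n" "\<tau> \<subseteq> unit_ball n c"
    by (rule large_simplex_in_unit_ball[OF \<tau>(1)])
  then show False
    using assms(3) \<tau>(2) by blast
qed

lemma collapsible_if_large_faces_in_unit_balls:
  assumes L: "L \<subseteq> VR (cube n) hamming 2" "downward_closed L" "\<forall>c\<in>cube n. unit_ball n c \<in> L"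
    and large: "\<forall>\<rho>\<in>L. 4 \<le> card \<rho> \<longrightarrow> (\<exists>c\<in>cube n. \<rho> \<subseteq> unit_ball n c)"
  shows "d_collapsible 4 L"
proof (rule collapsible_if_faces_in_unique_maximal[of _ 3])
  show "finite L"
    using L(1) finite_VR_cube by (rule finite_subset)
  show "\<forall>\<rho>\<in>L. finite \<rho>"
    using L(1) unfolding VR_def by blast
  show "\<forall>T\<in>L. card T = 3 \<longrightarrow> (\<exists>\<sigma>\<in>L. \<forall>\<rho>\<in>L. T \<subseteq> \<rho> \<longrightarrow> \<rho> \<subseteq> \<sigma>)"
    using triangle_in_unique_maximal_face[OF L(1,3) large] by blast
qed (simp_all add: L(2))

lemma VR_cube_4_collapsible: "d_collapsible 4 (VR (cube n) hamming 2)"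
proof -
  let ?K = "VR (cube n) hamming 2"
  define M where "M = {\<sigma> \<in> ?K. card \<sigma> = 4 \<and> (\<forall>c\<in>cube n. \<not> \<sigma> \<subseteq> unit_ball n c)}"
  have M_maximal: "\<forall>\<sigma>\<in>M. \<not> (\<exists>\<tau>\<in>?K. \<sigma> \<subset> \<tau>)"
  proof
    fix \<sigma> assume "\<sigma> \<in> M"
    show "\<not> (\<exists>\<tau>\<in>?K. \<sigma> \<subset> \<tau>)"
    proof (rule tetrahedron_outside_unit_balls_maximal)
      show "\<sigma> \<in> ?K" "card \<sigma> = 4" "\<forall>c\<in>cube n. \<not> \<sigma> \<subseteq> unit_ball n c"
        using \<open>\<sigma> \<in> M\<close> unfolding M_def by auto
    qed
  qed
  have "M \<subseteq> ?K" "\<forall>\<sigma>\<in>M. card \<sigma> \<le> 4"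
    unfolding M_def by auto
  moreover from this(1) have "finite M"
    using finite_VR_cube by (rule finite_subset)
  ultimately have "(elem_collapse 4)\<^sup>*\<^sup>* ?K (?K - M)"
    using M_maximal by (intro collapses_remove_maximal) blast+
  moreover have "d_collapsible 4 (?K - M)"
  proof (rule collapsible_if_large_faces_in_unit_balls)
    show "downward_closed (?K - M)"
      using downward_closed_VR M_maximal by (rule downward_closed_Diff_maximal)
    show "\<forall>c\<in>cube n. unit_ball n c \<in> ?K - M"
      using unit_ball_in_VR unfolding M_def by blast
    show "\<forall>\<rho>\<in>?K - M. 4 \<le> card \<rho> \<longrightarrow> (\<exists>c\<in>cube n. \<rho> \<subseteq> unit_ball n c)"
    proof (intro ballI impI)
      fix \<rho> assume \<rho>: "\<rho> \<in> ?K - M" "4 \<le> card \<rho>"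
      show "\<exists>c\<in>cube n. \<rho> \<subseteq> unit_ball n c"
      proof (cases "card \<rho> = 4")
        case False
        then have "5 \<le> card \<rho>"
          using \<rho>(2) by simp
        then show ?thesis
          using large_simplex_in_unit_ball[of \<rho> n] \<rho>(1) by blast
      qed (use \<rho> in \<open>auto simp: M_def\<close>)
    qed
    show "?K - M \<subseteq> ?K"
      by blast
  qed
  ultimately show ?thesis
    unfolding d_collapsible_def by (rule rtranclp_trans)
qed

section \<open>Lower bound\<close>

lemma collapses_keep_swappable:
  assumes "(elem_collapse d)\<^sup>*\<^sup>* K L" "finite K" "P \<subseteq> K" "\<forall>F\<in>P. d < card F"
    and swap: "\<forall>F\<in>P. \<forall>x\<in>F. \<exists>x'. insert x' (F - {x}) \<in> P \<and> (\<forall>\<sigma>\<in>K. \<not> {x, x'} \<subseteq> \<sigma>)"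
  shows "P \<subseteq> L"
  using assms(1)
proof (induction rule: rtranclp_induct)
  case base
  then show ?case using assms(3) .
next
  case (step L L')
  have "L \<subseteq> K"
    using step.hyps(1) by (rule collapses_subset)
  obtain \<gamma> \<sigma> where \<gamma>: "\<gamma> \<in> L" "card \<gamma> \<le> d" "maximal_simplex L \<sigma>" "\<gamma> \<subseteq> \<sigma>"
    and unique: "\<forall>\<sigma>'. maximal_simplex L \<sigma>' \<and> \<gamma> \<subseteq> \<sigma>' \<longrightarrow> \<sigma>' = \<sigma>"
    and L': "L' = L - {\<tau>. \<gamma> \<subseteq> \<tau> \<and> \<tau> \<subseteq> \<sigma>}"
    using step.hyps(2) unfolding elem_collapse_def by blast
  show ?case
  proof (rule subsetI, rule ccontr)
    fix F assume "F \<in> P" "F \<notin> L'"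
    then have F: "\<gamma> \<subseteq> F" "F \<subseteq> \<sigma>"
      using step.IH L' by auto
    moreover have "F \<noteq> \<gamma>"
      using \<open>F \<in> P\<close> \<gamma>(2) assms(4) by auto
    ultimately obtain x where x: "x \<in> F" "x \<notin> \<gamma>"
      by blast
    then obtain x' where F': "insert x' (F - {x}) \<in> P" and apart: "\<forall>\<sigma>\<in>K. \<not> {x, x'} \<subseteq> \<sigma>"
      using swap \<open>F \<in> P\<close> by blast
    obtain m where m: "maximal_simplex L m" "insert x' (F - {x}) \<subseteq> m"
      using maximal_simplex_exists[of L "insert x' (F - {x})"] F' step.IH \<open>L \<subseteq> K\<close> assms(2)
      by (meson finite_subset subsetD)
    then have "m = \<sigma>"
      using unique F(1) x(2) by blast
    then have "{x, x'} \<subseteq> \<sigma>"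
      using m(2) F(2) x(1) by blast
    moreover have "\<sigma> \<in> K"
      using \<gamma>(3) \<open>L \<subseteq> K\<close> unfolding maximal_simplex_def by blast
    ultimately show False
      using apart by blast
  qed
qed

definition subcube3 :: "nat \<Rightarrow> bool list set" where
  "subcube3 n = {w \<in> cube n. \<forall>i\<in>{3..<n}. \<not> w ! i}"

definition antipode3 :: "bool list \<Rightarrow> bool list" where
  "antipode3 x = flip_coords x {0, 1, 2}"

definition subcube3_tetrahedra :: "nat \<Rightarrow> bool list set set" where
  "subcube3_tetrahedra n = {F \<in> VR (cube n) hamming 2. F \<subseteq> subcube3 n \<and> card F = 4}"

lemma diff_coords_flip_coords_right:
  assumes "length x = length y" "C \<subseteq> {..<length x}"
  shows "diff_coords y (flip_coords x C) = sym_diff (diff_coords x y) C"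
  using diff_coords_eq_sym_diff[of x y "flip_coords x C"] diff_coords_flip_coords[OF assms(2)] assms(1)
  by simp

lemma diff_coords_subcube3:
  assumes "x \<in> subcube3 n" "y \<in> subcube3 n"
  shows "diff_coords x y \<subseteq> {0, 1, 2}"
  using assms unfolding subcube3_def cube_def diff_coords_def by force

lemma antipode3_in_subcube3:
  assumes "3 \<le> n" "x \<in> subcube3 n"
  shows "antipode3 x \<in> subcube3 n"
  using assms unfolding subcube3_def cube_def antipode3_def flip_coords_def by auto

lemma card_diff_coords_antipode3:
  assumes "3 \<le> n" "x \<in> subcube3 n" "y \<in> subcube3 n"
  shows "card (diff_coords y (antipode3 x)) = 3 - card (diff_coords x y)"
proof -
  have "length x = n" "length y = n"
    using assms(2,3) unfolding subcube3_def cube_def by auto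
  then have "diff_coords y (antipode3 x) = sym_diff (diff_coords x y) {0, 1, 2}"
    unfolding antipode3_def using assms(1) by (intro diff_coords_flip_coords_right) auto
  also have "\<dots> = {0, 1, 2} - diff_coords x y"
    using diff_coords_subcube3[OF assms(2,3)] by blast
  finally show ?thesis
    using diff_coords_subcube3[OF assms(2,3)] by (simp add: card_Diff_subset)
qed

lemma card_diff_coords_antipode3_self:
  assumes "3 \<le> n" "x \<in> subcube3 n"
  shows "card (diff_coords x (antipode3 x)) = 3"
  using card_diff_coords_antipode3[OF assms assms(2)] by (simp add: diff_coords_def)

lemma card_diff_coords_antipode3_le_2:
  assumes "3 \<le> n" "x \<in> subcube3 n" "y \<in> subcube3 n" "x \<noteq> y"
  shows "card (diff_coords y (antipode3 x)) \<le> 2"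
proof -
  have "length x = length y"
    using assms(2,3) unfolding subcube3_def cube_def by simp
  then have "diff_coords x y \<noteq> {}"
    using assms(4) by (simp add: diff_coords_eq_empty_iff)
  then have "card (diff_coords x y) \<noteq> 0"
    by simp
  then show ?thesis
    using card_diff_coords_antipode3[OF assms(1-3)] by linarith
qed

lemma antipode3_not_in_face:
  assumes "3 \<le> n" "x \<in> subcube3 n" "\<sigma> \<in> VR (cube n) hamming 2"
  shows "\<not> {x, antipode3 x} \<subseteq> \<sigma>"
  using assms(3) card_diff_coords_antipode3_self[OF assms(1,2)] unfolding VR_cube_iff by fastforce

lemma subcube3_tetrahedra_swap:
  assumes "3 \<le> n" "F \<in> subcube3_tetrahedra n" "x \<in> F"
  shows "insert (antipode3 x) (F - {x}) \<in> subcube3_tetrahedra n"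
proof -
  let ?x' = "antipode3 x" and ?F' = "insert (antipode3 x) (F - {x})"
  have F: "F \<subseteq> subcube3 n" "finite F" "card F = 4" "\<forall>v\<in>F. \<forall>w\<in>F. card (diff_coords v w) \<le> 2"
    using assms(2) unfolding subcube3_tetrahedra_def VR_cube_iff by auto
  have x: "x \<in> subcube3 n"
    using F(1) assms(3) by blast
  have near: "card (diff_coords y ?x') \<le> 2 \<and> card (diff_coords ?x' y) \<le> 2" if "y \<in> F - {x}" for y
  proof -
    have y: "y \<in> subcube3 n" "x \<noteq> y"
      using that F(1) by auto
    moreover have "length ?x' = length y"
      using x y(1) unfolding antipode3_def subcube3_def cube_def by simp
    ultimately show ?thesis
      using card_diff_coords_antipode3_le_2[OF assms(1) x] by (simp add: diff_coords_commute)
  qed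
  have "?x' \<notin> F"
    using F(4) assms(3) card_diff_coords_antipode3_self[OF assms(1) x] by fastforce
  then have "card ?F' = 4"
    using F(2,3) assms(3) by (simp add: card_Diff_singleton)
  moreover have "?F' \<subseteq> subcube3 n"
    using F(1) antipode3_in_subcube3[OF assms(1) x] by blast
  moreover have "\<forall>v\<in>?F'. \<forall>w\<in>?F'. card (diff_coords v w) \<le> 2"
  proof (intro ballI)
    fix v w assume "v \<in> ?F'" "w \<in> ?F'"
    then consider "v = ?x'" "w = ?x'" | "v = ?x'" "w \<in> F - {x}" | "v \<in> F - {x}" "w = ?x'"
      | "v \<in> F - {x}" "w \<in> F - {x}"
      by blast
    then show "card (diff_coords v w) \<le> 2"
      by cases (use near F(4) in \<open>auto simp: diff_coords_def\<close>)
  qed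
  ultimately show ?thesis
    using F(2) unfolding subcube3_tetrahedra_def VR_cube_iff subcube3_def by auto
qed

lemma subcube3_tetrahedra_nonempty:
  assumes "3 \<le> n"
  shows "subcube3_tetrahedra n \<noteq> {}"
proof -
  define z where "z = replicate n False"
  define F where "F = insert z ((\<lambda>k. flip_coords z {k}) ` {0, 1, 2})"
  have z: "z \<in> cube n" "length z = n"
    unfolding z_def cube_def by simp_all
  have diff_z: "diff_coords z (flip_coords z {k}) = {k}" if "k < 3" for k
    using assms that z(2) by (intro diff_coords_flip_coords) auto
  have F_cube: "F \<subseteq> cube n"
    using z unfolding F_def cube_def by auto
  have "inj_on (diff_coords z) F"
    using F_cube z(2) unfolding cube_def by (intro diff_coords_inj_on) auto
  then have "card F = card (diff_coords z ` F)"
    by (simp add: card_image)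
  also have "diff_coords z ` F = {{}, {0}, {1}, {2}}"
    unfolding F_def using diff_z by (simp add: diff_coords_def)
  finally have "card F = 4"
    by simp
  moreover have "F \<subseteq> subcube3 n"
    using F_cube unfolding F_def subcube3_def flip_coords_def z_def by auto
  moreover have "F \<subseteq> unit_ball n z"
    using F_cube diff_z unfolding unit_ball_def hamming_eq_card_diff_coords F_def
    by (auto simp: diff_coords_def)
  then have "F \<in> VR (cube n) hamming 2"
    using unit_ball_in_VR[OF z(1)] downward_closed_VR unfolding downward_closed_def by blast
  ultimately show ?thesis
    unfolding subcube3_tetrahedra_def by blast
qed

lemma VR_cube_not_collapsible_below_4:
  assumes "3 \<le> n" "d \<le> 3"
  shows "\<not> d_collapsible d (VR (cube n) hamming 2)"
proof
  assume "d_collapsible d (VR (cube n) hamming 2)"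
  then have "subcube3_tetrahedra n \<subseteq> {}"
    unfolding d_collapsible_def
  proof (rule collapses_keep_swappable[OF _ finite_VR_cube])
    show "subcube3_tetrahedra n \<subseteq> VR (cube n) hamming 2"
      unfolding subcube3_tetrahedra_def by blast
    show "\<forall>F\<in>subcube3_tetrahedra n. d < card F"
      using assms(2) unfolding subcube3_tetrahedra_def by simp
    show "\<forall>F\<in>subcube3_tetrahedra n. \<forall>x\<in>F. \<exists>x'. insert x' (F - {x}) \<in> subcube3_tetrahedra n \<and>
        (\<forall>\<sigma>\<in>VR (cube n) hamming 2. \<not> {x, x'} \<subseteq> \<sigma>)"
    proof (intro ballI)
      fix F x assume "F \<in> subcube3_tetrahedra n" "x \<in> F"
      moreover from this have "x \<in> subcube3 n"
        unfolding subcube3_tetrahedra_def by blast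
      ultimately show "\<exists>x'. insert x' (F - {x}) \<in> subcube3_tetrahedra n \<and>
          (\<forall>\<sigma>\<in>VR (cube n) hamming 2. \<not> {x, x'} \<subseteq> \<sigma>)"
        using subcube3_tetrahedra_swap[OF assms(1)] antipode3_not_in_face[OF assms(1)] by blast
    qed
  qed
  then show False
    using subcube3_tetrahedra_nonempty[OF assms(1)] by blast
qed

theorem theorem1p5:
  fixes n :: nat
  assumes "n \<ge> 3"
  shows "collapsibility_number (VR (cube n) hamming 2) = 4"
  unfolding collapsibility_number_def
proof (rule Least_equality)
  show "d_collapsible 4 (VR (cube n) hamming 2)"
    by (rule VR_cube_4_collapsible)
next
  fix d assume "d_collapsible d (VR (cube n) hamming 2)"
  then show "4 \<le> d"
    using VR_cube_not_collapsible_below_4[OF assms, of d] by linarith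
qed

end
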